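(* Let $n\in\mathbb N$ be fixed, $\mathbb H=L^2(\mathbb R)$ with norm $\|\cdot\|$, $(\mathcal Af)(x)=f(x+1)$, $g_n=\sum_{k=0}^nk!\,\kappa_{n,k}\mathbb 1_{[-k,-k+1]}$, $\bar{\mathcal A}_n:=\mathcal A-\beta\langle g_n,\cdot\rangle\mathbb 1_{[0,1]}$, and let $\|\bar{\mathcal A}_n\|_{\mathcal L}$ denote its operator norm. Define, for $t\in[0,T]$ and $M\in\mathbb N$, $$\hat u_n(t)=\frac{\alpha a_2}{2a_1}\langle g_n,e^{(T-t)\bar{\mathcal A}_n}\mathbb 1_{[0,1]}\rangle,\qquad \hat u_{n,M}(t)=\frac{\alpha a_2}{2a_1}\Big\langle g_n,\sum_{k=0}^M\frac{(T-t)^k}{k!}\bar{\mathcal A}_n^k\mathbb 1_{[0,1]}\Big\rangle.$$ Then for every $t\in[0,T]$ with $M\ge(T-t)\|\bar{\mathcal A}_n\|_{\mathcal L}$, $$|\hat u_n(t)-\hat u_{n,M}(t)|\le\frac{\alpha a_2}{2a_1}\|g_n\|\,e^{(T-t)\|\bar{\mathcal A}_n\|_{\mathcal L}}\Big(1-e^{-\frac{(T-t)\|\bar{\mathcal A}_n\|_{\mathcal L}}{M+1}}\Big).$$ Moreover, for $M\ge T\|\bar{\mathcal A}_n\|_{\mathcal L}$, $$\sup_{t\in[0,T]}|\hat u_n(t)-\hat u_{n,M}(t)|\le\frac{\alpha a_2}{2a_1}\|g_n\|\,e^{T\|\bar{\mathcal A}_n\|_{\mathcal L}}\Big(1-e^{-\frac{T\|\bar{\mathcal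 A}_n\|_{\mathcal L}}{M+1}}\Big),$$ and the right-hand side tends to $0$ as $M\to\infty$.
   Context: $T>0$, $\alpha,\beta>0$, $a_1,a_2>0$ are constants. $\kappa_{n,k}$ are the coefficients of the Bernstein polynomial approximation $K_n(t)=\frac{1}{T^n}\sum_{k=0}^nK\big(\frac{Tk}{n}\big)\binom nk t^k(T-t)^{n-k}=\sum_{k=0}^n\kappa_{n,k}t^k$ of a continuous kernel $K$ on $[0,T]$, i.e. $\kappa_{n,k}=\frac{1}{T^k}\sum_{i=0}^k(-1)^{k-i}K\big(\frac{iT}{n}\big)\binom ni\binom{n-i}{k-i}$. *)

theory Defs
  imports "HOL-Analysis.Analysis"
begin

text \<open>Elements of H = L^2(R) are represented by (Borel measurable, square-integrable)
  real functions; norms and inner products are the usual L^2 ones (well defined up to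
  a.e. equality, which none of the quantities below depends on).\<close>

definition sqint :: "(real \<Rightarrow> real) \<Rightarrow> bool" where
  "sqint f \<longleftrightarrow> f \<in> borel_measurable lborel \<and> integrable lborel (\<lambda>x. (f x)\<^sup>2)"

definition L2norm :: "(real \<Rightarrow> real) \<Rightarrow> real" where
  "L2norm f = sqrt (LINT x|lborel. (f x)\<^sup>2)"

definition L2inner :: "(real \<Rightarrow> real) \<Rightarrow> (real \<Rightarrow> real) \<Rightarrow> real" where
  "L2inner f g = (LINT x|lborel. f x * g x)"

definition opnorm :: "((real \<Rightarrow> real) \<Rightarrow> (real \<Rightarrow> real)) \<Rightarrow> real" where
  "opnorm B = Sup {L2norm (B f) | f. sqint f \<and> L2norm f \<le> 1}"

definition shiftA :: "(real \<Rightarrow> real) \<Rightarrow> (real \<Rightarrow> real)" where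
  "shiftA f = (\<lambda>x. f (x + 1))"

definition kappa :: "(real \<Rightarrow> real) \<Rightarrow> real \<Rightarrow> nat \<Rightarrow> nat \<Rightarrow> real" where
  "kappa K T n k = (1 / T ^ k) *
     (\<Sum>i=0..k. (-1) ^ (k - i) * K (real i * T / real n) * real (n choose i) * real ((n - i) choose (k - i)))"

definition g_n :: "(real \<Rightarrow> real) \<Rightarrow> real \<Rightarrow> nat \<Rightarrow> real \<Rightarrow> real" where
  "g_n K T n = (\<lambda>x. \<Sum>k=0..n. fact k * kappa K T n k * indicator {- real k .. - real k + 1} x)"

definition Abar :: "(real \<Rightarrow> real) \<Rightarrow> real \<Rightarrow> real \<Rightarrow> nat \<Rightarrow> (real \<Rightarrow> real) \<Rightarrow> (real \<Rightarrow> real)" where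
  "Abar K T \<beta> n f = (\<lambda>x. shiftA f x - \<beta> * L2inner (g_n K T n) f * indicator {0..1} x)"

definition exp_partial :: "nat \<Rightarrow> real \<Rightarrow> ((real \<Rightarrow> real) \<Rightarrow> (real \<Rightarrow> real)) \<Rightarrow> (real \<Rightarrow> real) \<Rightarrow> real \<Rightarrow> real" where
  "exp_partial M s B f = (\<lambda>x. \<Sum>k\<le>M. s ^ k / fact k * (B ^^ k) f x)"

text \<open>h represents e^{sB} f: the exponential series converges to h in H.\<close>
definition is_opexp :: "real \<Rightarrow> ((real \<Rightarrow> real) \<Rightarrow> (real \<Rightarrow> real)) \<Rightarrow> (real \<Rightarrow> real) \<Rightarrow> (real \<Rightarrow> real) \<Rightarrow> bool" where
  "is_opexp s B f h \<longleftrightarrow> sqint h \<and> (\<lambda>M. L2norm (\<lambda>x. exp_partial M s B f x - h x)) \<longlonglongrightarrow> 0"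

definition u_hat :: "(real \<Rightarrow> real) \<Rightarrow> real \<Rightarrow> real \<Rightarrow> real \<Rightarrow> real \<Rightarrow> real \<Rightarrow> nat \<Rightarrow> real \<Rightarrow> real" where
  "u_hat K T \<alpha> \<beta> a1 a2 n t = \<alpha> * a2 / (2 * a1) *
     (THE v. \<exists>h. is_opexp (T - t) (Abar K T \<beta> n) (indicator {0..1}) h \<and> v = L2inner (g_n K T n) h)"

definition u_hat_M :: "(real \<Rightarrow> real) \<Rightarrow> real \<Rightarrow> real \<Rightarrow> real \<Rightarrow> real \<Rightarrow> real \<Rightarrow> nat \<Rightarrow> nat \<Rightarrow> real \<Rightarrow> real" where
  "u_hat_M K T \<alpha> \<beta> a1 a2 n M t = \<alpha> * a2 / (2 * a1) *
     L2inner (g_n K T n) (exp_partial M (T - t) (Abar K T \<beta> n) (indicator {0..1}))"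

end

theory Submission
  imports Defs
begin

text \<open>Write \<open>s = T - t\<close>, \<open>N\<close> for the operator norm of \<open>Abar\<close> and \<open>x = s N\<close>.
  Since \<open>\<parallel>Abar^k 1_[0,1]\<parallel> \<le> N^k\<close>, the terms of the exponential series beyond the \<open>M\<close>-th
  have total norm at most \<open>e^x - \<Sum>k\<le>M. x^k / k!\<close>, and Cauchy-Schwarz bounds the error
  \<open>|u_hat - u_hat_M|\<close> by \<open>\<alpha> a2 / (2 a1) \<parallel>g_n\<parallel>\<close> times this tail. The scalar inequality
  \<open>\<Sum>k\<le>M. x^k / k! \<ge> e^(x M / (M + 1))\<close> for \<open>0 \<le> x \<le> M\<close> turns it into the stated
  bound; it rests on the fact that the median of a Poisson distribution with mean \<open>M\<close> is \<open>M\<close>.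

  The exponential itself exists because the iterates are also pointwise bounded: the series
  converges pointwise and, by Fatou's lemma, in L2. Any two L2 limits agree up to a null set,
  so \<open>u_hat\<close> is well defined.\<close>

section \<open>Truncated exponential series\<close>

definition exp_trunc :: "nat \<Rightarrow> real \<Rightarrow> real" where
  "exp_trunc M x = (\<Sum>k\<le>M. x ^ k / fact k)"

lemma exp_trunc_at_0 [simp]: "exp_trunc M 0 = 1"
  by (induction M) (simp_all add: exp_trunc_def)

lemma exp_trunc_nonneg: "0 \<le> x \<Longrightarrow> 0 \<le> exp_trunc M x"
  unfolding exp_trunc_def by (intro sum_nonneg) simp

lemma has_real_derivative_exp_trunc:
  "(exp_trunc M has_real_derivative exp_trunc M x - x ^ M / fact M) (at x)"
proof (induction M)
  case 0
  then show ?case by (simp add: exp_trunc_def)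
next
  case (Suc M)
  have "((\<lambda>x. x ^ Suc M / fact (Suc M)) has_real_derivative real (Suc M) * x ^ M / fact (Suc M)) (at x)"
    using DERIV_cdivide[OF DERIV_pow[of "Suc M" x], of "fact (Suc M)"] by simp
  also have "real (Suc M) * x ^ M / fact (Suc M) = x ^ M / fact M"
    by (simp add: field_simps del: of_nat_Suc)
  finally have "((\<lambda>x. x ^ Suc M / fact (Suc M)) has_real_derivative x ^ M / fact M) (at x)" .
  from DERIV_add[OF Suc this] show ?case
    by (simp add: exp_trunc_def)
qed

lemma exp_trunc_diff:
  "M \<le> L \<Longrightarrow> exp_trunc L x - exp_trunc M x = (\<Sum>k\<in>{M<..L}. x ^ k / fact k)"
proof -
  assume "M \<le> L"
  then have split: "{..L} = {..M} \<union> {M<..L}" by auto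
  show ?thesis unfolding exp_trunc_def split by (subst sum.union_disjoint) auto
qed

lemma exp_trunc_sums: "(\<lambda>k. x ^ k / fact k) sums exp (x::real)"
  using exp_converges[of x] by (simp add: divide_inverse mult.commute)

lemma exp_trunc_le_exp: "0 \<le> x \<Longrightarrow> exp_trunc M x \<le> exp x"
  unfolding exp_trunc_def sums_unique[OF exp_trunc_sums]
  by (intro sum_le_suminf sums_summable[OF exp_trunc_sums]) auto

lemma exp_trunc_LIMSEQ: "(\<lambda>M. exp_trunc M x) \<longlonglongrightarrow> exp x"
  unfolding exp_trunc_def sums_unique[OF exp_trunc_sums]
  by (rule summable_LIMSEQ'[OF sums_summable[OF exp_trunc_sums]])

definition poisson_cdf :: "nat \<Rightarrow> real \<Rightarrow> real" where
  "poisson_cdf M x = exp (- x) * exp_trunc M x"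

lemma has_real_derivative_poisson_cdf:
  "(poisson_cdf M has_real_derivative - exp (- x) * x ^ M / fact M) (at x)"
proof -
  have "((\<lambda>x. exp (- x) * exp_trunc M x) has_real_derivative
     - exp (- x) * exp_trunc M x + exp (- x) * (exp_trunc M x - x ^ M / fact M)) (at x)"
    by (auto intro!: derivative_eq_intros has_real_derivative_exp_trunc)
  then show ?thesis unfolding poisson_cdf_def by (simp add: algebra_simps)
qed

lemma one_minus_mult_exp_le:
  fixes v :: real
  assumes "0 \<le> v"
  shows "(1 - v) * exp v \<le> (1 + v) * exp (- v)"
proof -
  let ?f = "\<lambda>v. (1 + v) * exp (- v) - (1 - v) * exp v"
  have "?f 0 \<le> ?f v"
  proof (rule DERIV_nonneg_imp_nondecreasing[OF assms])
    fix y :: real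
    assume "0 \<le> y"
    then have "0 \<le> y * (exp y - exp (- y))" by simp
    moreover have "(?f has_real_derivative y * (exp y - exp (- y))) (at y)"
      by (auto intro!: derivative_eq_intros simp: algebra_simps)
    ultimately show "\<exists>d. (?f has_real_derivative d) (at y) \<and> 0 \<le> d" by blast
  qed
  then show ?thesis by simp
qed

lemma poisson_density_skew:
  fixes u :: real and M :: nat
  assumes "0 \<le> u" "u \<le> real M"
  shows "exp (- (M - u)) * (M - u) ^ M \<le> exp (- (M + u)) * (M + u) ^ M"
proof (cases "M = 0")
  case False
  define v where "v = u / M"
  have "M * ((1 - v) * exp v) \<le> M * ((1 + v) * exp (- v))"
    using one_minus_mult_exp_le[of v] assms by (intro mult_left_mono) (simp_all add: v_def)
  then have "(M - u) * exp v \<le> (M + u) * exp (- v)"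
    using False by (simp add: v_def algebra_simps)
  then have "((M - u) * exp v) ^ M \<le> ((M + u) * exp (- v)) ^ M"
    using assms by (intro power_mono) auto
  moreover have "exp v ^ M = exp u" "exp (- v) ^ M = exp (- u)"
    using False by (simp_all add: v_def flip: exp_of_nat_mult)
  ultimately have "(M - u) ^ M * exp u \<le> (M + u) ^ M * exp (- u)"
    by (simp add: power_mult_distrib)
  then have "exp (- M) * ((M - u) ^ M * exp u) \<le> exp (- M) * ((M + u) ^ M * exp (- u))"
    by simp
  then show ?thesis by (simp add: exp_diff exp_add exp_minus field_simps)
qed (use assms in simp)

text \<open>The median of the Poisson distribution with mean \<open>M\<close> is \<open>M\<close>: by the skewness
  of the density, the sum \<open>poisson_cdf M (M - u) + poisson_cdf M (M + u)\<close>
  is nonincreasing in \<open>u\<close>.\<close>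
lemma poisson_cdf_median: "1 / 2 \<le> poisson_cdf M (real M)"
proof -
  let ?H = "\<lambda>u. poisson_cdf M (real M - u) + poisson_cdf M (real M + u)"
  have "?H M \<le> ?H 0"
  proof (rule DERIV_nonpos_imp_nonincreasing[of "0::real" "real M" ?H])
    fix u assume u: "0 \<le> u" "u \<le> real M"
    have "(?H has_real_derivative
       exp (- (M - u)) * (M - u) ^ M / fact M - exp (- (M + u)) * (M + u) ^ M / fact M) (at u)"
      by (auto intro!: derivative_eq_intros DERIV_chain2[OF has_real_derivative_poisson_cdf])
    moreover have "exp (- (M - u)) * (M - u) ^ M / fact M \<le> exp (- (M + u)) * (M + u) ^ M / fact M"
      using poisson_density_skew[OF u] by (simp add: divide_right_mono)
    ultimately show "\<exists>d. (?H has_real_derivative d) (at u) \<and> d \<le> 0" by force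
  qed simp
  moreover have "0 \<le> poisson_cdf M (M + M)"
    by (simp add: poisson_cdf_def exp_trunc_nonneg)
  moreover have "poisson_cdf M 0 = 1"
    by (simp add: poisson_cdf_def)
  ultimately show ?thesis by simp
qed

lemma poisson_cdf_at_self_ge: "exp (- real M / (real M + 1)) \<le> poisson_cdf M (real M)"
proof -
  have e: "exp (1::real) < 272 / 100" by (rule e_less_272)
  consider "M = 0" | "M = 1" | "M = 2" | "M \<ge> 3" by linarith
  then show ?thesis
  proof cases
    case 1
    then show ?thesis by (simp add: poisson_cdf_def)
  next
    case 2
    have "exp (1/2::real) ^ 2 < 2 ^ 2"
      using e by (simp flip: exp_of_nat_mult)
    then have "exp (1/2::real) < 2" by (rule power_less_imp_less_base) simp
    moreover have "exp (- 1/2::real) = exp (1/2) * exp (- 1)" by (simp flip: exp_add)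
    ultimately show ?thesis using 2 by (simp add: poisson_cdf_def exp_trunc_def)
  next
    case 3
    have "exp (4/3::real) ^ 3 = exp 1 ^ 4" by (simp flip: exp_of_nat_mult)
    also have "\<dots> < (272/100) ^ 4" using e by (intro power_strict_mono) auto
    also have "\<dots> < 5 ^ 3" by (simp add: eval_nat_numeral)
    finally have "exp (4/3::real) < 5" by (rule power_less_imp_less_base) simp
    moreover have "exp (- 2/3::real) = exp (4/3) * exp (- 2)" by (simp flip: exp_add)
    ultimately show ?thesis
      using 3 by (simp add: poisson_cdf_def exp_trunc_def eval_nat_numeral fact_numeral)
  next
    case 4
    then have "3/4 \<le> real M / (real M + 1)" by (simp add: field_simps)
    then have "exp (- real M / (real M + 1)) \<le> exp (- (3/4))" by simp
    also have "\<dots> \<le> 1/2"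
    proof -
      have "1 + 3/4 + (3/4)\<^sup>2 / 2 \<le> exp (3/4::real)" by (rule exp_lower_Taylor_quadratic) simp
      then show ?thesis by (simp add: exp_minus field_simps power2_eq_square)
    qed
    also have "\<dots> \<le> poisson_cdf M (real M)" by (rule poisson_cdf_median)
    finally show ?thesis .
  qed
qed

lemma mult_exp_neg_divide_mono:
  fixes a b k :: real
  assumes "0 \<le> a" "a \<le> b" "b \<le> k"
  shows "a * exp (- a / k) \<le> b * exp (- b / k)"
proof (cases "k = 0")
  case False
  with assms have "0 < k" by simp
  show ?thesis
  proof (rule DERIV_nonneg_imp_nondecreasing[OF \<open>a \<le> b\<close>])
    fix y assume y: "a \<le> y" "y \<le> b"
    have "((\<lambda>x. x * exp (- x / k)) has_real_derivative exp (- y / k) * (1 - y / k)) (at y)"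
      using \<open>0 < k\<close> by (auto intro!: derivative_eq_intros simp: field_simps)
    moreover have "0 \<le> exp (- y / k) * (1 - y / k)"
      using assms y \<open>0 < k\<close> by simp
    ultimately show "\<exists>d. ((\<lambda>x. x * exp (- x / k)) has_real_derivative d) (at y) \<and> 0 \<le> d"
      by blast
  qed
qed (use assms in simp)

lemma unimodal_min_endpoints_le:
  fixes f f' :: "real \<Rightarrow> real"
  assumes "a \<le> x" "x \<le> b"
    and deriv: "\<And>y. (f has_real_derivative f' y) (at y)"
    and sign: "\<And>y z. a \<le> y \<Longrightarrow> y \<le> z \<Longrightarrow> z \<le> b \<Longrightarrow> 0 \<le> f' z \<Longrightarrow> 0 \<le> f' y"
  shows "min (f a) (f b) \<le> f x"
proof (cases "0 \<le> f' x")
  case True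
  have "f a \<le> f x"
  proof (rule DERIV_nonneg_imp_nondecreasing[OF \<open>a \<le> x\<close>])
    fix y assume "a \<le> y" "y \<le> x"
    with True assms have "0 \<le> f' y" by (intro sign[of y x]) auto
    with deriv show "\<exists>d. (f has_real_derivative d) (at y) \<and> 0 \<le> d" by blast
  qed
  then show ?thesis by simp
next
  case False
  have "f b \<le> f x"
  proof (rule DERIV_nonpos_imp_nonincreasing[OF \<open>x \<le> b\<close>])
    fix y assume "x \<le> y" "y \<le> b"
    with False assms have "\<not> 0 \<le> f' y" using sign[of x y] by auto
    with deriv show "\<exists>d. (f has_real_derivative d) (at y) \<and> d \<le> 0" by force
  qed
  then show ?thesis by simp
qed

lemma has_real_derivative_poisson_cdf_minus_exp:
  assumes k: "k = real M + 1"
  shows "((\<lambda>y. poisson_cdf M y - exp (- y / k)) has_real_derivative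
      exp (- y / k) / fact M * (fact M / k - (y * exp (- y / k)) ^ M)) (at y)"
proof -
  let ?E = "exp (- y / k)"
  have "?E * ?E ^ M = exp (real (Suc M) * (- y / k))"
    by (simp only: exp_of_nat_mult power_Suc)
  also have "real (Suc M) * (- y / k) = - y"
    by (simp add: k field_simps)
  finally have exp_y: "exp (- y) = ?E * ?E ^ M" ..
  have "((\<lambda>y. poisson_cdf M y - exp (- y / k)) has_real_derivative
      - exp (- y) * y ^ M / fact M - ?E * (- 1 / k)) (at y)"
    using k by (intro DERIV_diff has_real_derivative_poisson_cdf) (auto intro!: derivative_eq_intros)
  moreover have "- exp (- y) * y ^ M / fact M - ?E * (- 1 / k)
      = ?E / fact M * (fact M / k - (y * ?E) ^ M)"
    unfolding exp_y by (simp add: power_mult_distrib right_diff_distrib algebra_simps)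
  ultimately show ?thesis by simp
qed

text \<open>With \<open>k = M + 1\<close>, the derivative of \<open>poisson_cdf M y - exp (- y / k)\<close> is a positive
  multiple of \<open>M! / k - (y exp (- y / k)) ^ M\<close>, which changes sign at most once on
  \<open>[0, M]\<close>; so the difference is nonnegative there as soon as it is at both endpoints.\<close>
lemma exp_trunc_lower:
  fixes x :: real
  assumes "0 \<le> x" "x \<le> real M"
  shows "exp (x * real M / (real M + 1)) \<le> exp_trunc M x"
proof -
  define k where "k = real M + 1"
  define W where "W = (\<lambda>y. poisson_cdf M y - exp (- y / k))"
  have deriv: "(W has_real_derivative
      exp (- y / k) / fact M * (fact M / k - (y * exp (- y / k)) ^ M)) (at y)" for y
    unfolding W_def by (rule has_real_derivative_poisson_cdf_minus_exp[OF k_def])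
  have "min (W 0) (W M) \<le> W x"
  proof (rule unimodal_min_endpoints_le[OF assms deriv])
    fix y z :: real
    assume yz: "0 \<le> y" "y \<le> z" "z \<le> real M"
      and "0 \<le> exp (- z / k) / fact M * (fact M / k - (z * exp (- z / k)) ^ M)"
    then have "(z * exp (- z / k)) ^ M \<le> fact M / k"
      by (smt (verit) divide_pos_pos exp_gt_zero fact_gt_zero zero_le_mult_iff)
    moreover have "(y * exp (- y / k)) ^ M \<le> (z * exp (- z / k)) ^ M"
      using yz by (intro power_mono mult_exp_neg_divide_mono) (auto simp: k_def)
    ultimately show "0 \<le> exp (- y / k) / fact M * (fact M / k - (y * exp (- y / k)) ^ M)"
      by simp
  qed
  moreover have "W 0 = 0"
    by (simp add: W_def poisson_cdf_def)
  moreover have "0 \<le> W M"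
    using poisson_cdf_at_self_ge[of M] by (simp add: W_def k_def)
  ultimately have "exp (- x / k) \<le> exp (- x) * exp_trunc M x"
    by (simp add: W_def poisson_cdf_def)
  then have "exp x * exp (- x / k) \<le> exp x * (exp (- x) * exp_trunc M x)"
    by simp
  also have "\<dots> = exp_trunc M x"
    by (simp flip: mult.assoc exp_add)
  also have "exp x * exp (- x / k) = exp (x * real M / (real M + 1))"
    by (simp add: k_def add_divide_distrib flip: exp_add) (simp add: field_simps)
  finally show ?thesis .
qed

definition exp_tail_bound :: "nat \<Rightarrow> real \<Rightarrow> real" where
  "exp_tail_bound M x = exp x * (1 - exp (- x / (real M + 1)))"

lemma exp_minus_exp_trunc_le:
  "0 \<le> x \<Longrightarrow> x \<le> real M \<Longrightarrow> exp x - exp_trunc M x \<le> exp_tail_bound M x"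
  using exp_trunc_lower[of x M]
  by (simp add: exp_tail_bound_def algebra_simps field_simps flip: exp_add)

lemma exp_tail_bound_mono:
  assumes "0 \<le> x" "x \<le> y"
  shows "exp_tail_bound M x \<le> exp_tail_bound M y"
  unfolding exp_tail_bound_def
  using assms by (intro mult_mono) (auto simp: divide_right_mono)

lemma exp_tail_bound_LIMSEQ: "(\<lambda>M. exp_tail_bound M x) \<longlonglongrightarrow> 0"
proof -
  have "(\<lambda>M. - x * inverse (real (Suc M))) \<longlonglongrightarrow> 0"
    by (rule tendsto_mult_right_zero[OF LIMSEQ_inverse_real_of_nat])
  then have "(\<lambda>M. exp x * (1 - exp (- x * inverse (real (Suc M))))) \<longlonglongrightarrow> exp x * (1 - exp 0)"
    by (intro tendsto_intros)
  then show ?thesis by (simp add: exp_tail_bound_def divide_inverse add.commute)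
qed

section \<open>Square-integrable functions\<close>

lemma indicator_power2: "(\<lambda>x. (indicator A x :: real)\<^sup>2) = indicator A"
  by (auto simp: indicator_def fun_eq_iff)

lemma sqint_cmult: "sqint f \<Longrightarrow> sqint (\<lambda>x. c * f x)"
  by (auto simp: sqint_def power_mult_distrib)

lemma integrable_mult_if_sqint:
  assumes "sqint f" "sqint g"
  shows "integrable lborel (\<lambda>x. f x * g x)"
proof (rule Bochner_Integration.integrable_bound)
  show "integrable lborel (\<lambda>x. (f x)\<^sup>2 + (g x)\<^sup>2)"
    using assms by (simp add: sqint_def)
  show "(\<lambda>x. f x * g x) \<in> borel_measurable lborel"
    using assms by (auto simp: sqint_def)
  have "\<bar>f x * g x\<bar> \<le> (f x)\<^sup>2 + (g x)\<^sup>2" for x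
  proof -
    have "\<bar>f x * g x\<bar> \<le> 2 * \<bar>f x\<bar> * \<bar>g x\<bar>"
      by (simp add: abs_mult)
    also have "\<dots> \<le> (f x)\<^sup>2 + (g x)\<^sup>2"
      using sum_squares_bound[of "\<bar>f x\<bar>" "\<bar>g x\<bar>"] by simp
    finally show ?thesis .
  qed
  then show "AE x in lborel. norm (f x * g x) \<le> norm ((f x)\<^sup>2 + (g x)\<^sup>2)"
    by simp
qed

lemma sqint_add:
  assumes "sqint f" "sqint g"
  shows "sqint (\<lambda>x. f x + g x)"
proof -
  have "(\<lambda>x. (f x + g x)\<^sup>2) = (\<lambda>x. (f x)\<^sup>2 + (g x)\<^sup>2 + 2 * (f x * g x))"
    by (simp add: power2_sum mult.assoc)
  with assms integrable_mult_if_sqint[OF assms] show ?thesis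
    by (auto simp: sqint_def)
qed

lemma sqint_diff: "sqint f \<Longrightarrow> sqint g \<Longrightarrow> sqint (\<lambda>x. f x - g x)"
  using sqint_add[of f "\<lambda>x. - 1 * g x"] sqint_cmult[of g "- 1"] by simp

lemma sqint_sum: "(\<And>i. i \<in> A \<Longrightarrow> sqint (f i)) \<Longrightarrow> sqint (\<lambda>x. \<Sum>i\<in>A. f i x)"
proof (induction A rule: infinite_finite_induct)
  case (insert a A)
  then show ?case by (simp add: sqint_add)
qed (simp_all add: sqint_def)

lemma sqint_indicator_Icc: "sqint (indicator {a..b} :: real \<Rightarrow> real)"
  by (simp add: sqint_def indicator_power2 integrable_real_indicator emeasure_lborel_Icc_eq)

lemma sqint_shiftA: "sqint f \<Longrightarrow> sqint (shiftA f)"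
  using lborel_integrable_real_affine[of "\<lambda>x. (f x)\<^sup>2" 1 1]
  by (auto simp: sqint_def shiftA_def add.commute)

lemma L2norm_shiftA: "L2norm (shiftA f) = L2norm f"
  using lborel_integral_real_affine[of 1 "\<lambda>x. (f x)\<^sup>2" 1]
  by (simp add: L2norm_def shiftA_def add.commute)

lemma L2norm_nonneg: "0 \<le> L2norm f"
  by (simp add: L2norm_def)

lemma L2norm_power2: "(L2norm f)\<^sup>2 = (LINT x|lborel. (f x)\<^sup>2)"
  by (simp add: L2norm_def)

lemma L2norm_cmult: "L2norm (\<lambda>x. c * f x) = \<bar>c\<bar> * L2norm f"
  by (simp add: L2norm_def power_mult_distrib real_sqrt_mult)

lemma L2norm_indicator_Icc: "a \<le> b \<Longrightarrow> L2norm (indicator {a..b}) = sqrt (b - a)"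
  by (simp add: L2norm_def indicator_power2)

lemma L2norm_diff_commute: "L2norm (\<lambda>x. f x - g x) = L2norm (\<lambda>x. g x - f x)"
  using L2norm_cmult[of "- 1" "\<lambda>x. f x - g x"] by simp

lemma L2inner_cmult_right: "L2inner g (\<lambda>x. c * f x) = c * L2inner g f"
  by (simp add: L2inner_def mult.left_commute)

lemma L2inner_diff_right:
  "sqint g \<Longrightarrow> sqint f \<Longrightarrow> sqint h \<Longrightarrow> L2inner g (\<lambda>x. f x - h x) = L2inner g f - L2inner g h"
  by (simp add: L2inner_def right_diff_distrib integrable_mult_if_sqint)

lemma power2_L2norm_add_scaled:
  assumes "sqint f" "sqint g"
  shows "(L2norm (\<lambda>x. f x + t * g x))\<^sup>2 = (L2norm f)\<^sup>2 + 2 * t * L2inner f g + t\<^sup>2 * (L2norm g)\<^sup>2"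
proof -
  have "(\<lambda>x. (f x + t * g x)\<^sup>2) = (\<lambda>x. (f x)\<^sup>2 + (2 * t) * (f x * g x) + t\<^sup>2 * (g x)\<^sup>2)"
    by (simp add: power2_eq_square algebra_simps)
  with assms integrable_mult_if_sqint[OF assms] show ?thesis
    by (simp add: L2norm_power2 L2inner_def sqint_def)
qed

lemma quadratic_nonneg_imp_power2_le:
  fixes A B C :: real
  assumes nonneg: "\<And>t. 0 \<le> A + 2 * t * B + t\<^sup>2 * C" and "0 \<le> C"
  shows "B\<^sup>2 \<le> A * C"
proof (cases "C = 0")
  case True
  have "B = 0"
  proof (rule ccontr)
    assume "B \<noteq> 0"
    with True nonneg[of "- (A + 1) / (2 * B)"] show False by (simp add: field_simps)
  qed
  with True show ?thesis by simp
next
  case False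
  with \<open>0 \<le> C\<close> nonneg[of "- B / C"] show ?thesis
    by (simp add: field_simps power2_eq_square)
qed

lemma L2inner_Cauchy_Schwarz:
  assumes "sqint f" "sqint g"
  shows "\<bar>L2inner f g\<bar> \<le> L2norm f * L2norm g"
proof -
  have "(L2inner f g)\<^sup>2 \<le> (L2norm f)\<^sup>2 * (L2norm g)\<^sup>2"
    by (rule quadratic_nonneg_imp_power2_le) (simp_all flip: power2_L2norm_add_scaled[OF assms])
  then have "\<bar>L2inner f g\<bar> \<le> \<bar>L2norm f * L2norm g\<bar>"
    by (simp add: abs_le_square_iff power_mult_distrib)
  then show ?thesis
    by (simp add: L2norm_nonneg)
qed

lemma L2norm_triangle:
  assumes "sqint f" "sqint g"
  shows "L2norm (\<lambda>x. f x + g x) \<le> L2norm f + L2norm g"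
proof -
  have "(L2norm (\<lambda>x. f x + g x))\<^sup>2 = (L2norm f)\<^sup>2 + 2 * L2inner f g + (L2norm g)\<^sup>2"
    using power2_L2norm_add_scaled[OF assms, of 1] by simp
  also have "\<dots> \<le> (L2norm f + L2norm g)\<^sup>2"
    using L2inner_Cauchy_Schwarz[OF assms] by (simp add: power2_sum)
  finally show ?thesis
    by (rule power2_le_imp_le) (simp add: L2norm_nonneg add_nonneg_nonneg)
qed

lemma L2norm_diff_triangle:
  assumes "sqint f" "sqint g" "sqint h"
  shows "L2norm (\<lambda>x. f x - h x) \<le> L2norm (\<lambda>x. f x - g x) + L2norm (\<lambda>x. g x - h x)"
  using L2norm_triangle[of "\<lambda>x. f x - g x" "\<lambda>x. g x - h x"] assms by (simp add: sqint_diff)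

lemma L2norm_sum_le:
  assumes "\<And>i. i \<in> A \<Longrightarrow> sqint (f i)"
  shows "L2norm (\<lambda>x. \<Sum>i\<in>A. c i * f i x) \<le> (\<Sum>i\<in>A. \<bar>c i\<bar> * L2norm (f i))"
  using assms
proof (induction A rule: infinite_finite_induct)
  case (insert a A)
  have "L2norm (\<lambda>x. c a * f a x + (\<Sum>i\<in>A. c i * f i x))
      \<le> L2norm (\<lambda>x. c a * f a x) + L2norm (\<lambda>x. \<Sum>i\<in>A. c i * f i x)"
    using insert.prems by (intro L2norm_triangle sqint_cmult sqint_sum) auto
  with insert show ?case by (simp add: L2norm_cmult)
qed (simp_all add: L2norm_def)

lemma L2inner_eq_if_L2norm_diff_eq_0:
  assumes "sqint g" "sqint h1" "sqint h2" "L2norm (\<lambda>x. h1 x - h2 x) = 0"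
  shows "L2inner g h1 = L2inner g h2"
  using L2inner_Cauchy_Schwarz[OF assms(1) sqint_diff[OF assms(2,3)]] assms
  by (simp add: L2inner_diff_right)

lemma nn_integral_power2_eq_L2norm:
  "sqint f \<Longrightarrow> (\<integral>\<^sup>+x. ennreal ((f x)\<^sup>2) \<partial>lborel) = ennreal ((L2norm f)\<^sup>2)"
  by (simp add: L2norm_power2 sqint_def nn_integral_eq_integral)

lemma sqint_L2norm_le_of_pointwise_limit:
  assumes sqint: "\<And>L. sqint (F L)"
    and lim: "\<And>x. (\<lambda>L. F L x) \<longlonglongrightarrow> G x"
    and bound: "eventually (\<lambda>L. L2norm (F L) \<le> C) sequentially"
  shows "sqint G" and "L2norm G \<le> C"
proof -
  have [measurable]: "F L \<in> borel_measurable borel" for L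
    using sqint by (simp add: sqint_def)
  then have [measurable]: "G \<in> borel_measurable borel"
    by (rule borel_measurable_LIMSEQ_real[OF lim])
  obtain L0 where "L2norm (F L0) \<le> C"
    using bound by (auto simp: eventually_sequentially)
  then have "0 \<le> C"
    using L2norm_nonneg[of "F L0"] by linarith
  have "eventually (\<lambda>L. (\<integral>\<^sup>+x. ennreal ((F L x)\<^sup>2) \<partial>lborel) \<le> ennreal (C\<^sup>2)) sequentially"
    using bound
    by eventually_elim (simp add: nn_integral_power2_eq_L2norm[OF sqint] ennreal_leI power_mono L2norm_nonneg)
  then have "liminf (\<lambda>L. \<integral>\<^sup>+x. ennreal ((F L x)\<^sup>2) \<partial>lborel) \<le> ennreal (C\<^sup>2)"
    by (intro order_trans[OF Liminf_le_Limsup Limsup_bounded]) auto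
  moreover have "(\<integral>\<^sup>+x. ennreal ((G x)\<^sup>2) \<partial>lborel) \<le> liminf (\<lambda>L. \<integral>\<^sup>+x. ennreal ((F L x)\<^sup>2) \<partial>lborel)"
  proof -
    have "(\<lambda>x. ennreal ((G x)\<^sup>2)) = (\<lambda>x. liminf (\<lambda>L. ennreal ((F L x)\<^sup>2)))"
      by (intro ext lim_imp_Liminf[symmetric] trivial_limit_sequentially
          tendsto_ennrealI tendsto_power lim)
    then show ?thesis
      by (simp only:) (intro nn_integral_liminf; measurable)
  qed
  ultimately have fatou: "(\<integral>\<^sup>+x. ennreal ((G x)\<^sup>2) \<partial>lborel) \<le> ennreal (C\<^sup>2)"
    by (rule order_trans[rotated])
  have "integrable lborel (\<lambda>x. (G x)\<^sup>2)"
    using le_less_trans[OF fatou ennreal_less_top] by (intro integrableI_bounded) simp_all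
  then show "sqint G"
    by (simp add: sqint_def)
  then have "(L2norm G)\<^sup>2 \<le> C\<^sup>2"
    using fatou by (simp add: nn_integral_power2_eq_L2norm ennreal_le_iff)
  then show "L2norm G \<le> C"
    using \<open>0 \<le> C\<close> by (rule power2_le_imp_le)
qed

locale L2_bounded_operator =
  fixes B :: "(real \<Rightarrow> real) \<Rightarrow> real \<Rightarrow> real"
  assumes sqint_image: "sqint f \<Longrightarrow> sqint (B f)"
    and cmult: "sqint f \<Longrightarrow> B (\<lambda>x. c * f x) = (\<lambda>x. c * B f x)"
    and bounded: "\<exists>C. \<forall>f. sqint f \<and> L2norm f \<le> 1 \<longrightarrow> L2norm (B f) \<le> C"
begin

lemma L2norm_le_opnorm_if_unit: "sqint f \<Longrightarrow> L2norm f \<le> 1 \<Longrightarrow> L2norm (B f) \<le> opnorm B"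
  unfolding opnorm_def using bounded by (intro cSup_upper) (auto simp: bdd_above_def)

lemma opnorm_nonneg: "0 \<le> opnorm B"
proof -
  have "L2norm (B (\<lambda>x. 0)) \<le> opnorm B"
    by (rule L2norm_le_opnorm_if_unit) (simp_all add: sqint_def L2norm_def)
  then show ?thesis
    by (meson L2norm_nonneg order_trans)
qed

lemma L2norm_le_opnorm_mult:
  assumes "sqint f" "0 < r" "L2norm f \<le> r"
  shows "L2norm (B f) \<le> opnorm B * r"
proof -
  have "L2norm (\<lambda>x. (1 / r) * f x) \<le> 1"
    unfolding L2norm_cmult using assms by (simp add: field_simps)
  then have "L2norm (B (\<lambda>x. (1 / r) * f x)) \<le> opnorm B"
    by (rule L2norm_le_opnorm_if_unit[OF sqint_cmult[OF assms(1)]])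
  then have "1 / r * L2norm (B f) \<le> opnorm B"
    unfolding cmult[OF assms(1)] L2norm_cmult using assms by simp
  with assms show ?thesis
    by (simp add: field_simps)
qed

lemma L2norm_le_opnorm:
  assumes "sqint f"
  shows "L2norm (B f) \<le> opnorm B * L2norm f"
proof (cases "L2norm f = 0")
  case True
  have "L2norm (B f) \<le> e" if "0 < e" for e
  proof -
    have "L2norm (B f) \<le> opnorm B * (e / (opnorm B + 1))"
      using assms True that opnorm_nonneg by (intro L2norm_le_opnorm_mult) auto
    also have "\<dots> \<le> e"
      using that opnorm_nonneg by (simp add: field_simps)
    finally show ?thesis .
  qed
  with True show ?thesis
    by (simp add: field_le_epsilon)
next
  case False
  with assms L2norm_nonneg[of f] show ?thesis
    by (intro L2norm_le_opnorm_mult) auto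
qed

lemma sqint_funpow: "sqint f \<Longrightarrow> sqint ((B ^^ k) f)"
  by (induction k) (simp_all add: sqint_image)

lemma L2norm_funpow_le: "sqint f \<Longrightarrow> L2norm ((B ^^ k) f) \<le> opnorm B ^ k * L2norm f"
proof (induction k)
  case (Suc k)
  have "L2norm ((B ^^ Suc k) f) \<le> opnorm B * L2norm ((B ^^ k) f)"
    using Suc.prems by (simp add: L2norm_le_opnorm sqint_funpow)
  also have "\<dots> \<le> opnorm B * (opnorm B ^ k * L2norm f)"
    using Suc opnorm_nonneg by (intro mult_left_mono) auto
  finally show ?case by simp
qed simp

lemma sqint_exp_partial: "sqint f \<Longrightarrow> sqint (exp_partial M s B f)"
  unfolding exp_partial_def by (intro sqint_sum sqint_cmult sqint_funpow)

lemma L2norm_exp_partial_diff_le: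
  assumes "sqint f" "0 \<le> s" "M \<le> L"
  shows "L2norm (\<lambda>x. exp_partial L s B f x - exp_partial M s B f x)
    \<le> (exp (s * opnorm B) - exp_trunc M (s * opnorm B)) * L2norm f"
proof -
  have split: "{..L} = {..M} \<union> {M<..L}"
    using assms by auto
  have "exp_partial L s B f x - exp_partial M s B f x = (\<Sum>k\<in>{M<..L}. s ^ k / fact k * (B ^^ k) f x)" for x
    unfolding exp_partial_def split by (subst sum.union_disjoint) auto
  then have "L2norm (\<lambda>x. exp_partial L s B f x - exp_partial M s B f x)
      \<le> (\<Sum>k\<in>{M<..L}. \<bar>s ^ k / fact k\<bar> * L2norm ((B ^^ k) f))"
    using assms by (simp only:) (intro L2norm_sum_le sqint_funpow)
  also have "\<dots> \<le> (\<Sum>k\<in>{M<..L}. (s * opnorm B) ^ k / fact k * L2norm f)"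
  proof (rule sum_mono)
    fix k
    have "s ^ k / fact k * L2norm ((B ^^ k) f) \<le> s ^ k / fact k * (opnorm B ^ k * L2norm f)"
      using assms L2norm_funpow_le[OF assms(1)] by (intro mult_left_mono) simp_all
    then show "\<bar>s ^ k / fact k\<bar> * L2norm ((B ^^ k) f) \<le> (s * opnorm B) ^ k / fact k * L2norm f"
      using assms by (simp add: power_mult_distrib)
  qed
  also have "\<dots> = (exp_trunc L (s * opnorm B) - exp_trunc M (s * opnorm B)) * L2norm f"
    by (simp add: exp_trunc_diff[OF \<open>M \<le> L\<close>] sum_distrib_right)
  also have "\<dots> \<le> (exp (s * opnorm B) - exp_trunc M (s * opnorm B)) * L2norm f"
    using assms opnorm_nonneg
    by (intro mult_right_mono L2norm_nonneg) (simp_all add: exp_trunc_le_exp)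
  finally show ?thesis .
qed

lemma exp_partial_error_LIMSEQ:
  "(\<lambda>M. (exp (s * opnorm B) - exp_trunc M (s * opnorm B)) * L2norm f) \<longlonglongrightarrow> 0"
proof -
  have "(\<lambda>M. exp (s * opnorm B) - exp_trunc M (s * opnorm B)) \<longlonglongrightarrow> exp (s * opnorm B) - exp (s * opnorm B)"
    by (intro tendsto_diff tendsto_const exp_trunc_LIMSEQ)
  then show ?thesis
    by (intro tendsto_mult_left_zero) simp
qed

lemma is_opexp_suminf:
  assumes "sqint f" "0 \<le> s" and summable: "\<And>x. summable (\<lambda>k. s ^ k / fact k * (B ^^ k) f x)"
  defines "h \<equiv> \<lambda>x. \<Sum>k. s ^ k / fact k * (B ^^ k) f x"
  shows "is_opexp s B f h"
proof -
  let ?S = "\<lambda>M. exp_partial M s B f"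
  let ?err = "\<lambda>M. (exp (s * opnorm B) - exp_trunc M (s * opnorm B)) * L2norm f"
  have lim: "(\<lambda>L. ?S L x) \<longlonglongrightarrow> h x" for x
    unfolding exp_partial_def h_def by (rule summable_LIMSEQ'[OF summable])
  have error: "sqint (\<lambda>x. ?S M x - h x)" "L2norm (\<lambda>x. ?S M x - h x) \<le> ?err M" for M
  proof -
    have sqint: "sqint (\<lambda>x. ?S M x - ?S L x)" for L
      using assms by (intro sqint_diff sqint_exp_partial)
    have lim: "(\<lambda>L. ?S M x - ?S L x) \<longlonglongrightarrow> ?S M x - h x" for x
      by (intro tendsto_diff tendsto_const lim)
    have bound: "eventually (\<lambda>L. L2norm (\<lambda>x. ?S M x - ?S L x) \<le> ?err M) sequentially"
    proof (rule eventually_sequentiallyI)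
      fix L assume "M \<le> L"
      then show "L2norm (\<lambda>x. ?S M x - ?S L x) \<le> ?err M"
        unfolding L2norm_diff_commute[of "?S M" "?S L"]
        by (rule L2norm_exp_partial_diff_le[OF assms(1,2)])
    qed
    show "sqint (\<lambda>x. ?S M x - h x)" "L2norm (\<lambda>x. ?S M x - h x) \<le> ?err M"
      using sqint_L2norm_le_of_pointwise_limit[OF sqint lim bound] by simp_all
  qed
  have "sqint (\<lambda>x. ?S 0 x - (?S 0 x - h x))"
    using sqint_diff[OF sqint_exp_partial[OF assms(1)] error(1)] .
  moreover have "(\<lambda>M. L2norm (\<lambda>x. ?S M x - h x)) \<longlonglongrightarrow> 0"
  proof (rule tendsto_sandwich[OF _ _ tendsto_const exp_partial_error_LIMSEQ])
    show "eventually (\<lambda>M. 0 \<le> L2norm (\<lambda>x. ?S M x - h x)) sequentially"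
      by (simp add: L2norm_nonneg)
    show "eventually (\<lambda>M. L2norm (\<lambda>x. ?S M x - h x) \<le> ?err M) sequentially"
      using error by simp
  qed
  ultimately show ?thesis
    by (simp add: is_opexp_def)
qed

lemma L2norm_exp_partial_minus_opexp_le:
  assumes "sqint f" "0 \<le> s" "is_opexp s B f h"
  shows "L2norm (\<lambda>x. exp_partial M s B f x - h x)
    \<le> (exp (s * opnorm B) - exp_trunc M (s * opnorm B)) * L2norm f"
proof -
  let ?S = "\<lambda>M. exp_partial M s B f"
  let ?err = "(exp (s * opnorm B) - exp_trunc M (s * opnorm B)) * L2norm f"
  have h: "sqint h" "(\<lambda>L. L2norm (\<lambda>x. ?S L x - h x)) \<longlonglongrightarrow> 0"
    using assms by (simp_all add: is_opexp_def)
  have "L2norm (\<lambda>x. ?S M x - h x) \<le> ?err + L2norm (\<lambda>x. ?S L x - h x)" if "M \<le> L" for L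
  proof -
    have "L2norm (\<lambda>x. ?S M x - h x) \<le> L2norm (\<lambda>x. ?S M x - ?S L x) + L2norm (\<lambda>x. ?S L x - h x)"
      using assms h by (intro L2norm_diff_triangle sqint_exp_partial)
    also have "L2norm (\<lambda>x. ?S M x - ?S L x) \<le> ?err"
      using assms that by (simp add: L2norm_diff_commute[of "?S M"] L2norm_exp_partial_diff_le)
    finally show ?thesis by simp
  qed
  then show ?thesis
    using tendsto_add[OF tendsto_const h(2), of ?err]
    by (intro tendsto_le[OF trivial_limit_sequentially _ tendsto_const])
      (auto simp: eventually_sequentially)
qed

lemma is_opexp_unique:
  assumes "sqint f" "is_opexp s B f h1" "is_opexp s B f h2"
  shows "L2norm (\<lambda>x. h1 x - h2 x) = 0"
proof -
  let ?S = "\<lambda>M. exp_partial M s B f"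
  have h: "sqint h1" "sqint h2"
    using assms by (simp_all add: is_opexp_def)
  have lim: "(\<lambda>M. L2norm (\<lambda>x. ?S M x - h1 x) + L2norm (\<lambda>x. ?S M x - h2 x)) \<longlonglongrightarrow> 0 + 0"
    using assms unfolding is_opexp_def by (intro tendsto_add) auto
  have "L2norm (\<lambda>x. h1 x - h2 x) \<le> L2norm (\<lambda>x. ?S M x - h1 x) + L2norm (\<lambda>x. ?S M x - h2 x)" for M
    using L2norm_diff_triangle[OF h(1) sqint_exp_partial[OF assms(1)] h(2)]
    by (simp add: L2norm_diff_commute[of h1])
  then have "L2norm (\<lambda>x. h1 x - h2 x) \<le> 0 + 0"
    by (intro tendsto_le[OF trivial_limit_sequentially lim tendsto_const]) simp
  with L2norm_nonneg show ?thesis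
    by (simp add: order_antisym)
qed

end

section \<open>The perturbed shift\<close>

lemma sqint_g_n: "sqint (g_n K T n)"
  unfolding g_n_def by (intro sqint_sum sqint_cmult sqint_indicator_Icc)

lemma sqint_Abar: "sqint f \<Longrightarrow> sqint (Abar K T \<beta> n f)"
  unfolding Abar_def by (intro sqint_diff sqint_shiftA sqint_cmult sqint_indicator_Icc)

lemma Abar_cmult: "Abar K T \<beta> n (\<lambda>x. c * f x) = (\<lambda>x. c * Abar K T \<beta> n f x)"
  by (simp add: Abar_def shiftA_def L2inner_cmult_right algebra_simps fun_eq_iff)

lemma L2norm_indicator_01: "L2norm (indicator {0..1}) = 1"
  by (simp add: L2norm_indicator_Icc)

lemma L2norm_Abar_le:
  assumes "sqint f"
  shows "L2norm (Abar K T \<beta> n f) \<le> (1 + \<bar>\<beta>\<bar> * L2norm (g_n K T n)) * L2norm f"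
proof -
  let ?c = "- (\<beta> * L2inner (g_n K T n) f)"
  have "L2norm (Abar K T \<beta> n f) = L2norm (\<lambda>x. shiftA f x + ?c * indicator {0..1} x)"
    by (simp add: Abar_def)
  also have "\<dots> \<le> L2norm (shiftA f) + L2norm (\<lambda>x. ?c * indicator {0..1} x)"
    by (intro L2norm_triangle sqint_shiftA assms sqint_cmult sqint_indicator_Icc)
  also have "\<dots> = L2norm f + \<bar>\<beta>\<bar> * \<bar>L2inner (g_n K T n) f\<bar>"
    unfolding L2norm_shiftA L2norm_cmult L2norm_indicator_01 by (simp add: abs_mult)
  also have "\<dots> \<le> L2norm f + \<bar>\<beta>\<bar> * (L2norm (g_n K T n) * L2norm f)"
    using L2inner_Cauchy_Schwarz[OF sqint_g_n assms] by (intro add_left_mono mult_left_mono) simp_all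
  also have "\<dots> = (1 + \<bar>\<beta>\<bar> * L2norm (g_n K T n)) * L2norm f"
    by (simp add: algebra_simps)
  finally show ?thesis .
qed

interpretation Abar: L2_bounded_operator "Abar K T \<beta> n" for K T \<beta> n
proof
  show "sqint f \<Longrightarrow> sqint (Abar K T \<beta> n f)" for f
    by (rule sqint_Abar)
  show "Abar K T \<beta> n (\<lambda>x. c * f x) = (\<lambda>x. c * Abar K T \<beta> n f x)" for c f
    by (rule Abar_cmult)
  have "L2norm (Abar K T \<beta> n f) \<le> 1 + \<bar>\<beta>\<bar> * L2norm (g_n K T n)" if "sqint f" "L2norm f \<le> 1" for f
  proof -
    have "0 \<le> 1 + \<bar>\<beta>\<bar> * L2norm (g_n K T n)"
      by (simp add: L2norm_nonneg)
    with that have "(1 + \<bar>\<beta>\<bar> * L2norm (g_n K T n)) * L2norm f \<le> 1 + \<bar>\<beta>\<bar> * L2norm (g_n K T n)"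
      by (simp add: mult_left_le)
    with L2norm_Abar_le[OF that(1)] show ?thesis
      by (rule order_trans)
  qed
  then show "\<exists>C. \<forall>f. sqint f \<and> L2norm f \<le> 1 \<longrightarrow> L2norm (Abar K T \<beta> n f) \<le> C"
    by blast
qed

lemma abs_Abar_funpow_indicator_le:
  fixes K :: "real \<Rightarrow> real" and T \<beta> :: real and n :: nat
  defines "D \<equiv> 1 + opnorm (Abar K T \<beta> n) + \<bar>\<beta>\<bar> * L2norm (g_n K T n)"
  shows "\<bar>(Abar K T \<beta> n ^^ k) (indicator {0..1}) x\<bar> \<le> D ^ k"
proof (induction k arbitrary: x)
  case 0
  then show ?case by (simp add: indicator_def)
next
  case (Suc k)
  let ?f = "(Abar K T \<beta> n ^^ k) (indicator {0..1})"
  let ?b = "\<bar>\<beta>\<bar> * L2norm (g_n K T n)"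
  have b: "0 \<le> ?b" and N: "0 \<le> opnorm (Abar K T \<beta> n)"
    by (simp_all add: L2norm_nonneg Abar.opnorm_nonneg)
  have "L2norm ?f \<le> opnorm (Abar K T \<beta> n) ^ k * L2norm (indicator {0..1})"
    by (rule Abar.L2norm_funpow_le[OF sqint_indicator_Icc])
  also have "\<dots> \<le> D ^ k"
    unfolding L2norm_indicator_01 D_def mult_1_right using N b by (intro power_mono) simp_all
  finally have "L2norm (g_n K T n) * L2norm ?f \<le> L2norm (g_n K T n) * D ^ k"
    by (intro mult_left_mono L2norm_nonneg)
  with L2inner_Cauchy_Schwarz[OF sqint_g_n Abar.sqint_funpow[OF sqint_indicator_Icc]]
  have "\<bar>L2inner (g_n K T n) ?f\<bar> \<le> L2norm (g_n K T n) * D ^ k"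
    by (rule order_trans)
  then have inner: "\<bar>\<beta> * L2inner (g_n K T n) ?f * indicator {0..1} x\<bar> \<le> ?b * D ^ k"
    unfolding abs_mult mult.assoc by (intro mult_left_mono mult_le_one) (auto simp: indicator_def)
  have "(Abar K T \<beta> n ^^ Suc k) (indicator {0..1}) x
      = ?f (x + 1) - \<beta> * L2inner (g_n K T n) ?f * indicator {0..1} x"
    by (simp add: Abar_def shiftA_def)
  then have "\<bar>(Abar K T \<beta> n ^^ Suc k) (indicator {0..1}) x\<bar> \<le> D ^ k + ?b * D ^ k"
    using Suc.IH[of "x + 1"] inner by linarith
  also have "\<dots> \<le> D ^ Suc k"
    using N b by (simp add: D_def algebra_simps)
  finally show ?case .
qed

lemma summable_Abar_exp_series:
  "summable (\<lambda>k. s ^ k / fact k * (Abar K T \<beta> n ^^ k) (indicator {0..1}) x)"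
proof (rule summable_comparison_test)
  define D where "D = 1 + opnorm (Abar K T \<beta> n) + \<bar>\<beta>\<bar> * L2norm (g_n K T n)"
  show "summable (\<lambda>k. (\<bar>s\<bar> * D) ^ k / fact k)"
    using exp_trunc_sums by (rule sums_summable)
  have "norm (s ^ k / fact k * (Abar K T \<beta> n ^^ k) (indicator {0..1}) x) \<le> (\<bar>s\<bar> * D) ^ k / fact k" for k
  proof -
    have "\<bar>(Abar K T \<beta> n ^^ k) (indicator {0..1}) x\<bar> \<le> D ^ k"
      unfolding D_def by (rule abs_Abar_funpow_indicator_le)
    then have "\<bar>s\<bar> ^ k / fact k * \<bar>(Abar K T \<beta> n ^^ k) (indicator {0..1}) x\<bar> \<le> \<bar>s\<bar> ^ k / fact k * D ^ k"
      by (intro mult_left_mono) simp_all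
    then show ?thesis
      by (simp add: abs_mult power_abs power_mult_distrib)
  qed
  then show "\<exists>N. \<forall>k\<ge>N. norm (s ^ k / fact k * (Abar K T \<beta> n ^^ k) (indicator {0..1}) x)
      \<le> (\<bar>s\<bar> * D) ^ k / fact k"
    by blast
qed

lemma Abar_opexp_exists: "0 \<le> s \<Longrightarrow> \<exists>h. is_opexp s (Abar K T \<beta> n) (indicator {0..1}) h"
  using Abar.is_opexp_suminf[OF sqint_indicator_Icc _ summable_Abar_exp_series] by blast

lemma u_hat_eq:
  assumes "is_opexp (T - t) (Abar K T \<beta> n) (indicator {0..1}) h"
  shows "u_hat K T \<alpha> \<beta> a1 a2 n t = \<alpha> * a2 / (2 * a1) * L2inner (g_n K T n) h"
proof -
  have "(THE v. \<exists>h. is_opexp (T - t) (Abar K T \<beta> n) (indicator {0..1}) h \<and> v = L2inner (g_n K T n) h)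
      = L2inner (g_n K T n) h"
  proof (rule the_equality)
    fix v
    assume "\<exists>h'. is_opexp (T - t) (Abar K T \<beta> n) (indicator {0..1}) h' \<and> v = L2inner (g_n K T n) h'"
    then obtain h' where h': "is_opexp (T - t) (Abar K T \<beta> n) (indicator {0..1}) h'"
      and v: "v = L2inner (g_n K T n) h'"
      by blast
    have "L2norm (\<lambda>x. h' x - h x) = 0"
      using Abar.is_opexp_unique[OF sqint_indicator_Icc h' assms] .
    with h' assms show "v = L2inner (g_n K T n) h"
      unfolding v by (intro L2inner_eq_if_L2norm_diff_eq_0 sqint_g_n) (simp_all add: is_opexp_def)
  qed (use assms in blast)
  then show ?thesis
    by (simp add: u_hat_def)
qed

lemma u_hat_error_le:
  assumes "t \<le> T" and "0 \<le> \<alpha> * a2 / (2 * a1)"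
    and "(T - t) * opnorm (Abar K T \<beta> n) \<le> real M"
  shows "\<bar>u_hat K T \<alpha> \<beta> a1 a2 n t - u_hat_M K T \<alpha> \<beta> a1 a2 n M t\<bar>
    \<le> \<alpha> * a2 / (2 * a1) * L2norm (g_n K T n) * exp_tail_bound M ((T - t) * opnorm (Abar K T \<beta> n))"
proof -
  let ?c = "\<alpha> * a2 / (2 * a1)" and ?g = "g_n K T n" and ?B = "Abar K T \<beta> n"
  let ?x = "(T - t) * opnorm ?B" and ?S = "exp_partial M (T - t) ?B (indicator {0..1})"
  obtain h where h: "is_opexp (T - t) ?B (indicator {0..1}) h"
    using Abar_opexp_exists assms(1) by fastforce
  have sqint: "sqint h" "sqint ?S"
    using h by (simp_all add: is_opexp_def Abar.sqint_exp_partial sqint_indicator_Icc)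
  have "u_hat K T \<alpha> \<beta> a1 a2 n t - u_hat_M K T \<alpha> \<beta> a1 a2 n M t = ?c * L2inner ?g (\<lambda>x. h x - ?S x)"
    unfolding u_hat_eq[OF h] u_hat_M_def L2inner_diff_right[OF sqint_g_n sqint]
    by (simp only: right_diff_distrib)
  then have "\<bar>u_hat K T \<alpha> \<beta> a1 a2 n t - u_hat_M K T \<alpha> \<beta> a1 a2 n M t\<bar> = ?c * \<bar>L2inner ?g (\<lambda>x. h x - ?S x)\<bar>"
    using assms(2) by (simp only: abs_mult abs_of_nonneg)
  also have "\<dots> \<le> ?c * (L2norm ?g * L2norm (\<lambda>x. ?S x - h x))"
    unfolding L2norm_diff_commute[of ?S h]
    by (rule mult_left_mono[OF L2inner_Cauchy_Schwarz[OF sqint_g_n sqint_diff[OF sqint]] assms(2)])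
  also have "\<dots> \<le> ?c * (L2norm ?g * (exp ?x - exp_trunc M ?x))"
    using Abar.L2norm_exp_partial_minus_opexp_le[OF sqint_indicator_Icc _ h, of M] assms
    by (intro mult_left_mono L2norm_nonneg) (simp_all add: L2norm_indicator_01)
  also have "\<dots> \<le> ?c * (L2norm ?g * exp_tail_bound M ?x)"
    using assms Abar.opnorm_nonneg
    by (intro mult_left_mono L2norm_nonneg exp_minus_exp_trunc_le) simp_all
  finally show ?thesis
    by (simp add: mult.assoc)
qed

theorem theorem3p4:
  fixes K :: "real \<Rightarrow> real" and T \<alpha> \<beta> a1 a2 :: real and n :: nat
  assumes "T > 0" and "\<alpha> > 0" and "\<beta> > 0" and "a1 > 0" and "a2 > 0"
    and "continuous_on {0..T} K"
  defines "N \<equiv> opnorm (Abar K T \<beta> n)"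
    and "c \<equiv> \<alpha> * a2 / (2 * a1)"
  shows "(\<forall>t\<in>{0..T}. \<forall>M::nat. real M \<ge> (T - t) * N \<longrightarrow>
            \<bar>u_hat K T \<alpha> \<beta> a1 a2 n t - u_hat_M K T \<alpha> \<beta> a1 a2 n M t\<bar>
              \<le> c * L2norm (g_n K T n) * exp ((T - t) * N) * (1 - exp (- ((T - t) * N) / (real M + 1))))
       \<and> (\<forall>M::nat. real M \<ge> T * N \<longrightarrow>
            (SUP t\<in>{0..T}. \<bar>u_hat K T \<alpha> \<beta> a1 a2 n t - u_hat_M K T \<alpha> \<beta> a1 a2 n M t\<bar>)
              \<le> c * L2norm (g_n K T n) * exp (T * N) * (1 - exp (- (T * N) / (real M + 1))))
       \<and> (\<lambda>M::nat. c * L2norm (g_n K T n) * exp (T * N) * (1 - exp (- (T * N) / (real M + 1))))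
            \<longlonglongrightarrow> 0"
proof -
  let ?err = "\<lambda>M t. \<bar>u_hat K T \<alpha> \<beta> a1 a2 n t - u_hat_M K T \<alpha> \<beta> a1 a2 n M t\<bar>"
  let ?G = "c * L2norm (g_n K T n)"
  have "0 \<le> N" "0 \<le> c" "0 \<le> ?G"
    using assms by (simp_all add: N_def c_def Abar.opnorm_nonneg L2norm_nonneg)
  have pointwise: "?err M t \<le> ?G * exp_tail_bound M ((T - t) * N)"
    if "t \<in> {0..T}" "(T - t) * N \<le> real M" for t M
    unfolding N_def c_def
    by (rule u_hat_error_le) (use that \<open>0 \<le> c\<close> in \<open>simp_all add: N_def c_def\<close>)
  have uniform: "(SUP t\<in>{0..T}. ?err M t) \<le> ?G * exp_tail_bound M (T * N)" if "T * N \<le> real M" for M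
  proof (rule cSUP_least)
    fix t assume t: "t \<in> {0..T}"
    with \<open>0 \<le> N\<close> have "(T - t) * N \<le> T * N"
      by (simp add: mult_right_mono)
    with t \<open>0 \<le> N\<close> \<open>0 \<le> ?G\<close> that show "?err M t \<le> ?G * exp_tail_bound M (T * N)"
      by (intro order_trans[OF pointwise] mult_left_mono exp_tail_bound_mono) simp_all
  qed (use \<open>T > 0\<close> in simp)
  have "(\<lambda>M. ?G * exp_tail_bound M (T * N)) \<longlonglongrightarrow> 0"
    by (rule tendsto_mult_right_zero[OF exp_tail_bound_LIMSEQ])
  with pointwise uniform show ?thesis
    by (simp add: exp_tail_bound_def mult.assoc)
qed

end
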